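(* A connected finite simple graph $G$ is zero--M--cordial if and only if $G$ is Eulerian (every vertex has even degree) and $G$ has an even number of edges.
   Context: A labeling of a graph $G$ is a map $f:E(G)\to\{-1,+1\}$; for each vertex $v$ set $f(v)=\sum_{e\in I(v)} f(e)$, where $I(v)$ is the set of edges incident to $v$. A labeling $f$ is zero--M--cordial if $f(v)=0$ for every vertex $v$. A graph is zero--M--cordial if it admits a zero--M--cordial labeling. *)

theory Defs
  imports Main
begin

definition simple_graph :: "'a set \<Rightarrow> 'a set set \<Rightarrow> bool" where
  "simple_graph V E \<longleftrightarrow> finite V \<and>
     (\<forall>e\<in>E. \<exists>u v. e = {u, v} \<and> u \<noteq> v \<and> u \<in> V \<and> v \<in> V)"

definition incident_edges :: "'a set set \<Rightarrow> 'a \<Rightarrow> 'a set set" where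
  "incident_edges E v = {e \<in> E. v \<in> e}"

definition degree :: "'a set set \<Rightarrow> 'a \<Rightarrow> nat" where
  "degree E v = card (incident_edges E v)"

definition adj_rel :: "'a set set \<Rightarrow> ('a \<times> 'a) set" where
  "adj_rel E = {(u, v). {u, v} \<in> E}"

definition connected_graph :: "'a set \<Rightarrow> 'a set set \<Rightarrow> bool" where
  "connected_graph V E \<longleftrightarrow> (\<forall>u\<in>V. \<forall>v\<in>V. (u, v) \<in> (adj_rel E)\<^sup>*)"

definition labeling :: "'a set set \<Rightarrow> ('a set \<Rightarrow> int) \<Rightarrow> bool" where
  "labeling E f \<longleftrightarrow> (\<forall>e\<in>E. f e = -1 \<or> f e = 1)"

definition vertex_label :: "'a set set \<Rightarrow> ('a set \<Rightarrow> int) \<Rightarrow> 'a \<Rightarrow> int" where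
  "vertex_label E f v = (\<Sum>e\<in>incident_edges E v. f e)"

definition zero_M_cordial_labeling :: "'a set \<Rightarrow> 'a set set \<Rightarrow> ('a set \<Rightarrow> int) \<Rightarrow> bool" where
  "zero_M_cordial_labeling V E f \<longleftrightarrow> labeling E f \<and> (\<forall>v\<in>V. vertex_label E f v = 0)"

definition zero_M_cordial :: "'a set \<Rightarrow> 'a set set \<Rightarrow> bool" where
  "zero_M_cordial V E \<longleftrightarrow> (\<exists>f. zero_M_cordial_labeling V E f)"

definition eulerian :: "'a set \<Rightarrow> 'a set set \<Rightarrow> bool" where
  "eulerian V E \<longleftrightarrow> (\<forall>v\<in>V. even (degree E v))"

end

theory Submission
  imports Defs
begin

text \<open>
  Necessity: f(v) has the parity of deg v, and summing f(v) over all vertices counts every edge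
  label twice, so a zero labeling has as many edges labelled +1 as -1.

  Sufficiency: call h a capacity if h v <= 2, h v has the parity of deg v, and every edge can
  reach a vertex of positive capacity.  By induction on the number of edges, every capacity admits
  a labeling with |f(v)| <= h v: remove an edge xy with h x > 0, label the rest for suitably
  adjusted capacities at x and y, and give xy the sign that moves f(y) towards 0.  If xy lies on
  a cycle, x pays for the step with one unit of its capacity; if xy is a bridge, negating all
  labels in the component of x moves f(x) towards 0 as well.  For a connected Eulerian graph, the
  capacity 2 at one vertex a and 0 elsewhere yields f = 0 away from a, and f(a) = 2 * (sum of edge
  labels) is then a multiple of 4 in [-2, 2].
\<close>

lemma even_sum_pm1_iff:
  assumes "finite A" "\<forall>a\<in>A. f a = -1 \<or> f a = (1::int)"
  shows "even (sum f A) \<longleftrightarrow> even (card A)"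
  using assms
proof (induction A rule: finite_induct)
  case (insert a A)
  then have "f a = -1 \<or> f a = 1" by simp
  with insert show ?case by auto
qed simp

lemma even_vertex_label_iff:
  assumes "finite E" "labeling E f"
  shows "even (vertex_label E f v) \<longleftrightarrow> even (degree E v)"
  unfolding vertex_label_def degree_def
  using assms by (intro even_sum_pm1_iff) (auto simp: incident_edges_def labeling_def)

lemma simple_graph_finite_edges:
  assumes "simple_graph V E"
  shows "finite E"
proof -
  have "E \<subseteq> Pow V" using assms by (auto simp: simple_graph_def)
  then show ?thesis using assms by (auto simp: simple_graph_def intro: finite_subset)
qed

lemma degree_outside_vertices:
  assumes "simple_graph V E" "v \<notin> V"
  shows "degree E v = 0"
proof -
  have "incident_edges E v = {}"
    using assms by (auto simp: simple_graph_def incident_edges_def)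
  then show ?thesis by (simp add: degree_def)
qed

lemma sum_vertex_label:
  assumes "simple_graph V E"
  shows "(\<Sum>v\<in>V. vertex_label E f v) = 2 * (\<Sum>e\<in>E. f e)"
proof -
  have sub: "e \<subseteq> V" "card e = 2" if "e \<in> E" for e
    using assms that unfolding simple_graph_def by auto
  have "(\<Sum>v\<in>V. vertex_label E f v) = (\<Sum>v\<in>V. \<Sum>e\<in>{e\<in>E. v \<in> e}. f e)"
    by (simp add: vertex_label_def incident_edges_def)
  also have "\<dots> = (\<Sum>e\<in>E. \<Sum>v\<in>{v\<in>V. v \<in> e}. f e)"
    using assms simple_graph_finite_edges by (intro sum.swap_restrict) (auto simp: simple_graph_def)
  also have "\<dots> = (\<Sum>e\<in>E. 2 * f e)"
  proof (rule sum.cong)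
    fix e assume "e \<in> E"
    then have "{v\<in>V. v \<in> e} = e" "card e = 2" using sub by auto
    then show "(\<Sum>v\<in>{v\<in>V. v \<in> e}. f e) = 2 * f e" by simp
  qed simp
  finally show ?thesis by (simp add: sum_distrib_left)
qed

lemma zero_M_cordial_imp_eulerian:
  assumes "simple_graph V E" "zero_M_cordial V E"
  shows "eulerian V E \<and> even (card E)"
proof -
  obtain f where lab: "labeling E f" and zero: "\<And>v. v \<in> V \<Longrightarrow> vertex_label E f v = 0"
    using assms(2) by (auto simp: zero_M_cordial_def zero_M_cordial_labeling_def)
  have finE: "finite E" using assms(1) by (rule simple_graph_finite_edges)
  have "eulerian V E"
    unfolding eulerian_def using even_vertex_label_iff[OF finE lab] zero by (metis dvd_0_right)
  moreover have "(\<Sum>e\<in>E. f e) = 0"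
    using sum_vertex_label[OF assms(1), of f] zero by simp
  then have "even (card E)"
    using even_sum_pm1_iff[OF finE, of f] lab by (simp add: labeling_def)
  ultimately show ?thesis ..
qed

lemma incident_edges_remove:
  "e \<in> E \<Longrightarrow> incident_edges E v =
    (if v \<in> e then insert e (incident_edges (E - {e}) v) else incident_edges (E - {e}) v)"
  by (auto simp: incident_edges_def)

lemma degree_remove_edge:
  assumes "finite E" "e \<in> E"
  shows "degree E v = degree (E - {e}) v + (if v \<in> e then 1 else 0)"
  using assms incident_edges_remove[OF assms(2), of v]
  by (simp add: degree_def) (simp add: incident_edges_def)

lemma vertex_label_remove_edge:
  assumes "finite E" "e \<in> E"
  shows "vertex_label E (f(e := s)) v = vertex_label (E - {e}) f v + (if v \<in> e then s else 0)"
proof -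
  have "(\<Sum>e'\<in>incident_edges (E - {e}) v. (f(e := s)) e') = (\<Sum>e'\<in>incident_edges (E - {e}) v. f e')"
    by (rule sum.cong) (auto simp: incident_edges_def)
  then show ?thesis
    using assms incident_edges_remove[OF assms(2), of v]
    by (simp add: vertex_label_def) (simp add: incident_edges_def)
qed

lemma odd_vertex_label_remove_edge_iff:
  assumes "finite E" "e \<in> E" "v \<in> e" "labeling (E - {e}) f"
  shows "odd (vertex_label (E - {e}) f v) \<longleftrightarrow> even (degree E v)"
  using assms degree_remove_edge[OF assms(1,2), of v] even_vertex_label_iff[of "E - {e}" f v]
  by simp

lemma rtrancl_adj_rel_remove_edge:
  assumes "(v, w) \<in> (adj_rel E)\<^sup>*"
  shows "(v, w) \<in> (adj_rel (E - {{x, y}}))\<^sup>* \<or> (v, x) \<in> (adj_rel (E - {{x, y}}))\<^sup>*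
     \<or> (v, y) \<in> (adj_rel (E - {{x, y}}))\<^sup>*"
  using assms
proof (induction rule: rtrancl_induct)
  case (step z w)
  show ?case
  proof (cases "{z, w} = {x, y}")
    case True
    then have "z = x \<or> z = y" by (metis doubleton_eq_iff)
    with step.IH show ?thesis by auto
  next
    case False
    then have "(z, w) \<in> adj_rel (E - {{x, y}})" using step.hyps(2) by (auto simp: adj_rel_def)
    with step.IH show ?thesis by (meson rtrancl.rtrancl_into_rtrancl)
  qed
qed simp

lemma rtrancl_adj_rel_edge:
  assumes "card e = 2" "e \<in> E" "u \<in> e" "v \<in> e" "(x, u) \<in> (adj_rel E)\<^sup>*"
  shows "(x, v) \<in> (adj_rel E)\<^sup>*"
proof -
  obtain z where "e = {u, z}" using assms(1,3) by (metis card_2_iff insert_commute insertE singletonD)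
  then show ?thesis using assms(2,4,5) by (auto simp: adj_rel_def intro: rtrancl_into_rtrancl)
qed

lemma vertex_label_negate_on_closed:
  assumes "\<forall>e\<in>E. e \<inter> R \<noteq> {} \<longrightarrow> e \<subseteq> R"
  shows "vertex_label E (\<lambda>e. if e \<subseteq> R then - f e else f e) v =
         (if v \<in> R then - vertex_label E f v else vertex_label E f v)"
proof (cases "v \<in> R")
  case True
  then have "e \<subseteq> R" if "e \<in> incident_edges E v" for e
    using assms that by (auto simp: incident_edges_def)
  then show ?thesis using True by (simp add: vertex_label_def sum_negf[symmetric])
next
  case False
  then have "\<not> e \<subseteq> R" if "e \<in> incident_edges E v" for e
    using that by (auto simp: incident_edges_def)
  then show ?thesis using False by (simp add: vertex_label_def)
qed

lemma abs_add_unit_le: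
  fixes b s :: int and n :: nat
  assumes "\<bar>b\<bar> \<le> 2" "s = -1 \<or> s = 1" "b * s \<le> 0" "odd b \<longleftrightarrow> even n"
  shows "\<bar>b + s\<bar> \<le> int n"
proof -
  have "b \<in> {-2, -1, 0, 1, 2}" using assms(1) by auto
  then show ?thesis using assms(2-4) odd_pos[of n] by auto
qed

definition bounded_labeling :: "'a set set \<Rightarrow> ('a \<Rightarrow> nat) \<Rightarrow> ('a set \<Rightarrow> int) \<Rightarrow> bool" where
  "bounded_labeling E h f \<longleftrightarrow> labeling E f \<and> (\<forall>v. \<bar>vertex_label E f v\<bar> \<le> int (h v))"

text \<open>A vertex of positive capacity reachable from an edge is where the parity defect of its
  component can be absorbed.\<close>
definition capacity :: "'a set set \<Rightarrow> ('a \<Rightarrow> nat) \<Rightarrow> bool" where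
  "capacity E h \<longleftrightarrow> (\<forall>v. h v \<le> 2) \<and> (\<forall>v. even (h v) \<longleftrightarrow> even (degree E v)) \<and>
     (\<forall>e\<in>E. \<forall>u\<in>e. \<exists>w. (u, w) \<in> (adj_rel E)\<^sup>* \<and> 0 < h w)"

definition full_capacity :: "'a set set \<Rightarrow> 'a \<Rightarrow> nat" where
  "full_capacity E v = (if even (degree E v) then 2 else 1)"

lemma full_capacity_le: "full_capacity E v \<le> 2"
  by (simp add: full_capacity_def)

lemma capacity_reach_positive:
  "capacity E h \<Longrightarrow> e \<in> E \<Longrightarrow> u \<in> e \<Longrightarrow> \<exists>w. (u, w) \<in> (adj_rel E)\<^sup>* \<and> 0 < h w"
  by (simp add: capacity_def)

lemma capacity_positive_edge:
  assumes "capacity E h" "\<forall>e\<in>E. card e = 2" "E \<noteq> {}"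
  obtains x y where "{x, y} \<in> E" "x \<noteq> y" "0 < h x"
proof -
  obtain u v where uv: "{u, v} \<in> E" "u \<noteq> v"
    using assms(2,3) by (metis card_2_iff ex_in_conv)
  then obtain w where w: "(u, w) \<in> (adj_rel E)\<^sup>*" "0 < h w"
    using capacity_reach_positive[OF assms(1) uv(1)] by blast
  from w(1) show ?thesis
  proof (cases rule: rtranclE)
    case base
    then show ?thesis using that uv w(2) by blast
  next
    case (step z)
    then have wz: "{w, z} \<in> E" by (simp add: adj_rel_def insert_commute)
    then have "card {w, z} = 2" using assms(2) by blast
    then have "w \<noteq> z" by auto
    with wz show ?thesis using that w(2) by blast
  qed
qed

lemma capacity_remove_edge:
  assumes "capacity E h" "{x, y} \<in> E"
    and "\<forall>v. h' v \<le> 2" "\<forall>v. even (h' v) \<longleftrightarrow> even (degree (E - {{x, y}}) v)"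
    and "\<forall>v. v \<noteq> x \<longrightarrow> 0 < h v \<longrightarrow> 0 < h' v" "0 < h' y"
    and "0 < h' x \<or> (x, y) \<in> (adj_rel (E - {{x, y}}))\<^sup>*"
  shows "capacity (E - {{x, y}}) h'"
proof -
  define r where "r = (adj_rel (E - {{x, y}}))\<^sup>*"
  have via_y: "\<exists>w. (u, w) \<in> r \<and> 0 < h' w" if "(u, y) \<in> r" for u
    using that assms(6) by blast
  have via_x: "\<exists>w. (u, w) \<in> r \<and> 0 < h' w" if "(u, x) \<in> r" for u
  proof (cases "0 < h' x")
    case True
    then show ?thesis using that by blast
  next
    case False
    then have "(u, y) \<in> r" using that assms(7) unfolding r_def by (meson rtrancl_trans)
    then show ?thesis by (rule via_y)
  qed
  have reach: "\<exists>w. (u, w) \<in> r \<and> 0 < h' w" if e: "e \<in> E - {{x, y}}" and u: "u \<in> e" for e u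
  proof -
    have "e \<in> E" using e by simp
    then obtain w where w: "(u, w) \<in> (adj_rel E)\<^sup>*" "0 < h w"
      using capacity_reach_positive[OF assms(1) _ u] by blast
    then consider "(u, w) \<in> r" | "(u, x) \<in> r" | "(u, y) \<in> r"
      using rtrancl_adj_rel_remove_edge[OF w(1), of x y] unfolding r_def by blast
    then show ?thesis
    proof cases
      case 1
      show ?thesis
      proof (cases "w = x")
        case True
        then show ?thesis using 1 via_x by simp
      next
        case False
        then show ?thesis using 1 w(2) assms(5) by blast
      qed
    qed (use via_x via_y in simp_all)
  qed
  show ?thesis
    unfolding capacity_def using assms(3,4) reach unfolding r_def by blast
qed

lemma bounded_labeling_add_edge:
  assumes "finite E" "e \<in> E" "labeling (E - {e}) g" "s = -1 \<or> s = 1"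
    and "\<And>v. v \<notin> e \<Longrightarrow> \<bar>vertex_label (E - {e}) g v\<bar> \<le> int (h v)"
    and "\<And>v. v \<in> e \<Longrightarrow> \<bar>vertex_label (E - {e}) g v + s\<bar> \<le> int (h v)"
  shows "bounded_labeling E h (g(e := s))"
  using assms vertex_label_remove_edge[OF assms(1,2)]
  by (auto simp: bounded_labeling_def labeling_def)

lemma abs_vertex_label_add_edge_le:
  assumes "finite E" "e \<in> E" "v \<in> e" "labeling (E - {e}) g"
    and "even (h v) \<longleftrightarrow> even (degree E v)"
    and "\<bar>vertex_label (E - {e}) g v\<bar> \<le> 2" "s = -1 \<or> s = 1" "vertex_label (E - {e}) g v * s \<le> 0"
  shows "\<bar>vertex_label (E - {e}) g v + s\<bar> \<le> int (h v)"
  using assms odd_vertex_label_remove_edge_iff[OF assms(1-4)] by (intro abs_add_unit_le) auto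

lemma bounded_labeling_add_cycle_edge:
  assumes "finite E" "{x, y} \<in> E" "x \<noteq> y" "0 < h x"
    and parity: "\<And>v. even (h v) \<longleftrightarrow> even (degree E v)"
    and f: "bounded_labeling (E - {{x, y}}) (h(x := h x - 1, y := full_capacity (E - {{x, y}}) y)) f"
  shows "\<exists>f. bounded_labeling E h f"
proof -
  define a where "a = vertex_label (E - {{x, y}}) f"
  define s :: int where "s = (if 0 < a y then -1 else 1)"
  have lab: "labeling (E - {{x, y}}) f" and bound: "\<And>v. \<bar>a v\<bar> \<le>
      int ((h(x := h x - 1, y := full_capacity (E - {{x, y}}) y)) v)"
    using f by (auto simp: bounded_labeling_def a_def)
  have "bounded_labeling E h (f({x, y} := s))"
  proof (rule bounded_labeling_add_edge[OF assms(1,2) lab])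
    fix v assume "v \<in> {x, y}"
    then consider "v = x" | "v = y" by blast
    then show "\<bar>vertex_label (E - {{x, y}}) f v + s\<bar> \<le> int (h v)"
    proof cases
      case 1
      then show ?thesis using bound[of x] assms(3,4) by (auto simp: a_def s_def)
    next
      case 2
      have "\<bar>a y\<bar> \<le> 2" using bound[of y] full_capacity_le[of "E - {{x, y}}" y] by simp
      then show ?thesis using 2 parity lab
        by (intro abs_vertex_label_add_edge_le[OF assms(1,2)]) (auto simp: a_def s_def)
    qed
  next
    fix v assume "v \<notin> {x, y}"
    then show "\<bar>vertex_label (E - {{x, y}}) f v\<bar> \<le> int (h v)" using bound[of v] by (simp add: a_def)
  qed (simp add: s_def)
  then show ?thesis by blast
qed

lemma bounded_labeling_add_bridge:
  assumes "finite E" "\<forall>e\<in>E. card e = 2" "{x, y} \<in> E" "x \<noteq> y"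
    and parity: "\<And>v. even (h v) \<longleftrightarrow> even (degree E v)"
    and "(x, y) \<notin> (adj_rel (E - {{x, y}}))\<^sup>*"
    and f: "bounded_labeling (E - {{x, y}})
      (h(x := full_capacity (E - {{x, y}}) x, y := full_capacity (E - {{x, y}}) y)) f"
  shows "\<exists>f. bounded_labeling E h f"
proof -
  define E' where "E' = E - {{x, y}}"
  define R where "R = {v. (x, v) \<in> (adj_rel E')\<^sup>*}"
  define a where "a = vertex_label E' f"
  define s :: int where "s = (if 0 < a y then -1 else 1)"
  \<comment> \<open>R does not contain y, so negating the labels inside R fixes the sign at x independently.\<close>
  define negate where "negate \<longleftrightarrow> 0 < a x * s"
  define g where "g = (if negate then (\<lambda>e. if e \<subseteq> R then - f e else f e) else f)"
  have lab: "labeling E' f"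
    and bound: "\<And>v. \<bar>a v\<bar> \<le> int ((h(x := full_capacity E' x, y := full_capacity E' y)) v)"
    using f by (auto simp: bounded_labeling_def a_def E'_def)
  have "\<forall>e\<in>E'. e \<inter> R \<noteq> {} \<longrightarrow> e \<subseteq> R"
    using assms(2) rtrancl_adj_rel_edge[of _ E'] unfolding R_def E'_def by blast
  then have g: "vertex_label E' g v = (if negate \<and> v \<in> R then - a v else a v)" for v
    unfolding g_def a_def using vertex_label_negate_on_closed[of E' R f v] by auto
  have "x \<in> R" "y \<notin> R" using assms(6) by (auto simp: R_def E'_def)
  then have gx: "vertex_label E' g x * s \<le> 0" and gy: "vertex_label E' g y * s \<le> 0"
    by (auto simp: g negate_def s_def mult_le_0_iff)
  have labg: "labeling E' g" using lab by (auto simp: g_def labeling_def)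
  have "bounded_labeling E h (g({x, y} := s))"
  proof (rule bounded_labeling_add_edge[OF assms(1,3) labg[unfolded E'_def]])
    fix v assume v: "v \<in> {x, y}"
    have "\<bar>a v\<bar> \<le> int (full_capacity E' v)" using bound[of v] v assms(4) by auto
    then have "\<bar>vertex_label E' g v\<bar> \<le> 2" using full_capacity_le[of E' v] by (simp add: g)
    with v show "\<bar>vertex_label (E - {{x, y}}) g v + s\<bar> \<le> int (h v)"
      using parity labg gx gy unfolding E'_def
      by (intro abs_vertex_label_add_edge_le[OF assms(1,3)]) (auto simp: s_def)
  next
    fix v assume "v \<notin> {x, y}"
    then show "\<bar>vertex_label (E - {{x, y}}) g v\<bar> \<le> int (h v)"
      using bound[of v] g[of v] by (simp add: E'_def)
  qed (simp add: s_def)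
  then show ?thesis by blast
qed

lemma capacity_bounded_labeling:
  assumes "finite E" "\<forall>e\<in>E. card e = 2" "capacity E h"
  shows "\<exists>f. bounded_labeling E h f"
  using assms
proof (induction E arbitrary: h rule: finite_psubset_induct)
  case (psubset E)
  show ?case
  proof (cases "E = {}")
    case True
    then have "bounded_labeling E h (\<lambda>_. 1)"
      by (simp add: bounded_labeling_def labeling_def vertex_label_def incident_edges_def)
    then show ?thesis by blast
  next
    case False
    then obtain x y where xy: "{x, y} \<in> E" "x \<noteq> y" "0 < h x"
      using capacity_positive_edge psubset.prems by metis
    define E' where "E' = E - {{x, y}}"
    have IH: "\<exists>f. bounded_labeling E' h' f" if "capacity E' h'" for h'
      using psubset.IH[of E' h'] psubset.prems(1) that xy(1) by (auto simp: E'_def)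
    have deg: "degree E v = degree E' v + (if v \<in> {x, y} then 1 else 0)" for v
      unfolding E'_def using degree_remove_edge[OF psubset.hyps xy(1)] .
    have hpar: "even (h v) \<longleftrightarrow> even (degree E v)" "h v \<le> 2" for v
      using psubset.prems(2) by (auto simp: capacity_def)
    show ?thesis
    proof (cases "(x, y) \<in> (adj_rel E')\<^sup>*")
      case True
      let ?h' = "h(x := h x - 1, y := full_capacity E' y)"
      have "capacity E' ?h'"
        unfolding E'_def
        by (rule capacity_remove_edge[OF psubset.prems(2) xy(1)])
          (use hpar deg xy(2,3) True in
            \<open>auto simp: le_trans[OF diff_le_self hpar(2)] full_capacity_def E'_def\<close>)
      then show ?thesis
        using IH bounded_labeling_add_cycle_edge[OF psubset.hyps xy hpar(1)]
        unfolding E'_def by blast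
    next
      case False
      let ?h' = "h(x := full_capacity E' x, y := full_capacity E' y)"
      have "capacity E' ?h'"
        unfolding E'_def
        by (rule capacity_remove_edge[OF psubset.prems(2) xy(1)])
          (use hpar deg xy(2) in \<open>auto simp: full_capacity_def E'_def\<close>)
      then show ?thesis
        using IH bounded_labeling_add_bridge[OF psubset.hyps psubset.prems(1) xy(1,2) hpar(1)]
          False[unfolded E'_def]
        unfolding E'_def by blast
    qed
  qed
qed

lemma eulerian_imp_zero_M_cordial:
  assumes "simple_graph V E" "connected_graph V E" "eulerian V E" "even (card E)"
    and "a \<in> V"
  shows "zero_M_cordial V E"
proof -
  define h where "h v = (if v = a then 2 else 0 :: nat)" for v
  have finE: "finite E" using assms(1) by (rule simple_graph_finite_edges)
  have edge: "e \<subseteq> V" "card e = 2" if "e \<in> E" for e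
    using assms(1) that by (auto simp: simple_graph_def)
  have "\<forall>e\<in>E. card e = 2" using edge by blast
  moreover have "capacity E h"
    unfolding capacity_def
  proof (intro conjI allI ballI)
    fix v
    show "even (h v) \<longleftrightarrow> even (degree E v)"
      using assms(3) degree_outside_vertices[OF assms(1), of v]
      by (cases "v \<in> V") (auto simp: h_def eulerian_def)
  next
    fix e u assume "e \<in> E" "u \<in> e"
    then have "(u, a) \<in> (adj_rel E)\<^sup>*"
      using assms(2,5) edge by (auto simp: connected_graph_def)
    then show "\<exists>w. (u, w) \<in> (adj_rel E)\<^sup>* \<and> 0 < h w" by (auto simp: h_def)
  qed (simp add: h_def)
  ultimately have "\<exists>f. bounded_labeling E h f" by (rule capacity_bounded_labeling[OF finE])
  then obtain f where lab: "labeling E f" and bound: "\<And>v. \<bar>vertex_label E f v\<bar> \<le> int (h v)"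
    by (auto simp: bounded_labeling_def)
  have off_a: "vertex_label E f v = 0" if "v \<noteq> a" for v
    using bound[of v] that by (simp add: h_def)
  have "vertex_label E f a = (\<Sum>v\<in>V. vertex_label E f v)"
    using off_a assms(5) assms(1) by (simp add: sum.remove simple_graph_def)
  also have "\<dots> = 2 * (\<Sum>e\<in>E. f e)" by (rule sum_vertex_label[OF assms(1)])
  finally have "4 dvd vertex_label E f a"
    using even_sum_pm1_iff[OF finE, of f] lab assms(4) by (auto simp: labeling_def)
  moreover have "\<bar>vertex_label E f a\<bar> \<le> 2" using bound[of a] by (simp add: h_def)
  ultimately have "vertex_label E f a = 0" by presburger
  then have "zero_M_cordial_labeling V E f"
    using off_a lab by (metis zero_M_cordial_labeling_def)
  then show ?thesis by (auto simp: zero_M_cordial_def)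
qed

theorem theorem2:
  fixes V :: "'a set" and E :: "'a set set"
  assumes "simple_graph V E" and "connected_graph V E"
  shows "zero_M_cordial V E \<longleftrightarrow> (eulerian V E \<and> even (card E))"
proof
  assume "zero_M_cordial V E"
  then show "eulerian V E \<and> even (card E)" by (rule zero_M_cordial_imp_eulerian[OF assms(1)])
next
  assume cond: "eulerian V E \<and> even (card E)"
  show "zero_M_cordial V E"
  proof (cases "V = {}")
    case True
    then show ?thesis by (auto simp: zero_M_cordial_def zero_M_cordial_labeling_def labeling_def)
  next
    case False
    then obtain a where "a \<in> V" by blast
    with assms cond show ?thesis by (intro eulerian_imp_zero_M_cordial) auto
  qed
qed

end
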